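(* Define $f_{\mathrm{HbM}}(X)=\operatorname{diag}(|X|\mathbf{1}_n)^{-1}XX^{\top}$ and consider the dynamical system $X(t+1)=f_{\mathrm{HbM}}(X(t))$, $t\in\mathbb{Z}_{\ge0}$. Pick $X_0\in\mathcal{S}_{\mathrm{nz\text{-}row}}$. Then: (i) $f_{\mathrm{HbM}}$ is well-defined for every $X\in\mathcal{S}_{\mathrm{nz\text{-}row}}$ and maps $\mathcal{S}_{\mathrm{nz\text{-}row}}$ into $\mathcal{S}^{+}_{\mathrm{s\text{-}symm}}$; (ii) the solution $X(t)$, $t\in\mathbb{Z}_{\ge0}$, from the initial condition $X(0)=X_0$ exists and is unique; (iii) every such solution satisfies $\max_{i,j}|X_{ij}(t+1)|\le\max_{i,j}|X_{ij}(t)|\le\max_{i,j}|X_{ij}(0)|$ for all $t$; (iv) for every $c>0$, the trajectory $cX(t)$ is the solution from the initial condition $X(0)=cX_0$.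
   Context: $\mathbf{1}_n$ is the all-ones vector, $|X|$ is the entry-wise absolute value, $\operatorname{sign}$ is entry-wise sign, $X_{i*}$ is the $i$-th row. $\mathcal{S}_{\mathrm{nz\text{-}row}}=\{X\in\mathbb{R}^{n\times n}: X_{i*}\neq\mathbf{0}_n^{\top}\text{ for every }i\}$. $\mathcal{S}^{+}_{\mathrm{s\text{-}symm}}=\{X\in\mathbb{R}^{n\times n}:\operatorname{sign}(X)=\operatorname{sign}(X)^{\top}\text{ and }X_{ii}>0\text{ for every }i\}$. *)

theory Defs
  imports "HOL-Analysis.Analysis"
begin

text \<open>Square matrices of a fixed size n = CARD('n) are modelled as real^'n^'n.\<close>

definition ones_vec :: "real^'n" where
  "ones_vec = (\<chi> i. 1)"

definition abs_mat :: "real^'n^'m \<Rightarrow> real^'n^'m" where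
  "abs_mat X = (\<chi> i j. \<bar>X $ i $ j\<bar>)"

definition sign_mat :: "real^'n^'m \<Rightarrow> real^'n^'m" where
  "sign_mat X = (\<chi> i j. sgn (X $ i $ j))"

definition diag_mat :: "real^'n \<Rightarrow> real^'n^'n" where
  "diag_mat v = (\<chi> i j. if i = j then v $ i else 0)"

definition S_nz_row :: "(real^'n^'n) set" where
  "S_nz_row = {X. \<forall>i. X $ i \<noteq> 0}"

definition S_s_symm_pos :: "(real^'n^'n) set" where
  "S_s_symm_pos = {X. sign_mat X = transpose (sign_mat X) \<and> (\<forall>i. X $ i $ i > 0)}"

definition f_HbM :: "real^'n^'n \<Rightarrow> real^'n^'n" where
  "f_HbM X = matrix_inv (diag_mat (abs_mat X *v ones_vec)) ** X ** transpose X"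

text \<open>A solution of X(t+1) = f_HbM(X(t)) from X(0) = X0: every state lies in the
  domain S_nz_row where f_HbM is well-defined, and the recursion holds.\<close>
definition is_HbM_solution :: "(nat \<Rightarrow> real^'n^'n) \<Rightarrow> real^'n^'n \<Rightarrow> bool" where
  "is_HbM_solution X X0 \<longleftrightarrow> X 0 = X0 \<and> (\<forall>t. X t \<in> S_nz_row \<and> X (Suc t) = f_HbM (X t))"

definition max_abs_entry :: "real^'n^'n \<Rightarrow> real" where
  "max_abs_entry X = Max {\<bar>X $ i $ j\<bar> | i j. True}"

end

theory Submission
  imports Defs
begin

text \<open>Inverting the diagonal matrix of absolute row sums only rescales the rows, so
  \<open>f_HbM X $ i $ j = (X $ i \<bullet> X $ j) / \<Sum>\<^sub>k \<bar>X $ i $ k\<bar>\<close>.  Hence the sign pattern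
  of \<open>f_HbM X\<close> is that of the Gram matrix \<open>X X\<^sup>T\<close>, which is symmetric with positive
  diagonal when no row vanishes, and each entry is bounded by the largest absolute
  entry of \<open>X\<close> since \<open>\<bar>X $ i \<bullet> X $ j\<bar> \<le> (\<Sum>\<^sub>k \<bar>X $ i $ k\<bar>) max_abs_entry X\<close>.
  As \<open>f_HbM\<close> maps \<open>S_nz_row\<close> into itself, the iterates of \<open>f_HbM\<close> form the unique
  solution, and \<open>f_HbM\<close> is positively homogeneous of degree one.\<close>

definition abs_row_sum :: "real^'n^'m \<Rightarrow> 'm \<Rightarrow> real" where
  "abs_row_sum X i = (\<Sum>k\<in>UNIV. \<bar>X $ i $ k\<bar>)"

lemma abs_mat_mult_ones_vec: "(abs_mat X *v ones_vec) $ i = abs_row_sum X i"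
  by (simp add: abs_mat_def ones_vec_def matrix_vector_mult_def abs_row_sum_def)

lemma abs_row_sum_pos:
  assumes "X $ i \<noteq> 0"
  shows "abs_row_sum X i > 0"
proof -
  obtain k where "X $ i $ k \<noteq> 0"
    using assms by (metis vec_eq_iff zero_index)
  moreover have "\<bar>X $ i $ k\<bar> \<le> abs_row_sum X i"
    unfolding abs_row_sum_def by (rule member_le_sum) auto
  ultimately show ?thesis by linarith
qed

lemma S_nz_row_abs_row_sum_pos: "X \<in> S_nz_row \<Longrightarrow> abs_row_sum X i > 0"
  by (simp add: S_nz_row_def abs_row_sum_pos)

lemma abs_row_sum_scaleR:
  assumes "c \<ge> 0"
  shows "abs_row_sum (c *\<^sub>R X) i = c * abs_row_sum X i"
  using assms by (simp add: abs_row_sum_def abs_mult sum_distrib_left)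

lemma diag_mat_mult_nth: "(diag_mat a ** M) $ i $ j = a $ i * M $ i $ j"
proof -
  have "(\<Sum>k\<in>UNIV. (if i = k then a $ i else 0) * M $ k $ j)
      = (\<Sum>k\<in>UNIV. if k = i then a $ i * M $ i $ j else 0)"
    by (rule sum.cong) auto
  then show ?thesis
    by (simp add: diag_mat_def matrix_matrix_mult_def)
qed

lemma matrix_inv_eqI:
  fixes A B :: "'a::field^'n^'n"
  assumes "A ** B = mat 1"
  shows "matrix_inv A = B"
proof -
  have BA: "B ** A = mat 1"
    using assms matrix_left_right_inverse by blast
  define C where "C = matrix_inv A"
  have "A ** C = mat 1 \<and> C ** A = mat 1"
    unfolding C_def matrix_inv_def by (rule someI [of _ B]) (use assms BA in blast)
  then have "C = C ** (A ** B)"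
    using assms by (simp add: matrix_mul_rid)
  also have "\<dots> = (C ** A) ** B"
    by (simp add: matrix_mul_assoc)
  also have "\<dots> = B"
    using \<open>A ** C = mat 1 \<and> C ** A = mat 1\<close> by (simp add: matrix_mul_lid)
  finally show ?thesis
    using C_def by simp
qed

lemma diag_mat_inverse:
  fixes a :: "real^'n"
  assumes "\<And>i. a $ i \<noteq> 0"
  shows "diag_mat a ** diag_mat (\<chi> i. 1 / a $ i) = mat 1"
  using assms by (simp add: vec_eq_iff diag_mat_mult_nth) (simp add: diag_mat_def mat_def)

lemma invertible_diag_mat:
  fixes a :: "real^'n"
  assumes "\<And>i. a $ i \<noteq> 0"
  shows "invertible (diag_mat a)"
  using diag_mat_inverse [OF assms] invertible_right_inverse by blast

lemma matrix_inv_diag_mat: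
  fixes a :: "real^'n"
  assumes "\<And>i. a $ i \<noteq> 0"
  shows "matrix_inv (diag_mat a) = diag_mat (\<chi> i. 1 / a $ i)"
  using diag_mat_inverse [OF assms] by (rule matrix_inv_eqI)

lemma invertible_diag_abs_row_sums:
  fixes X :: "real^'n^'n"
  assumes "X \<in> S_nz_row"
  shows "invertible (diag_mat (abs_mat X *v ones_vec))"
proof (rule invertible_diag_mat)
  fix i
  have "abs_row_sum X i > 0"
    using assms by (rule S_nz_row_abs_row_sum_pos)
  then show "(abs_mat X *v ones_vec) $ i \<noteq> 0"
    by (simp add: abs_mat_mult_ones_vec)
qed

lemma f_HbM_nth:
  fixes X :: "real^'n^'n"
  assumes "X \<in> S_nz_row"
  shows "f_HbM X $ i $ j = (X $ i \<bullet> X $ j) / abs_row_sum X i"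
proof -
  have "abs_row_sum X i \<noteq> 0" for i
    using S_nz_row_abs_row_sum_pos [OF assms] by (metis less_irrefl)
  then have "matrix_inv (diag_mat (abs_mat X *v ones_vec)) = diag_mat (\<chi> i. 1 / abs_row_sum X i)"
    by (subst matrix_inv_diag_mat) (simp_all add: abs_mat_mult_ones_vec)
  then have "f_HbM X = diag_mat (\<chi> i. 1 / abs_row_sum X i) ** (X ** transpose X)"
    by (simp add: f_HbM_def matrix_mul_assoc)
  then have "f_HbM X $ i $ j = (X ** transpose X) $ i $ j / abs_row_sum X i"
    by (simp add: diag_mat_mult_nth)
  then show ?thesis
    by (simp add: matrix_matrix_mult_def transpose_def inner_vec_def)
qed

lemma f_HbM_diag_pos:
  fixes X :: "real^'n^'n"
  assumes "X \<in> S_nz_row"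
  shows "f_HbM X $ i $ i > 0"
proof -
  have "X $ i \<bullet> X $ i > 0"
    using assms by (simp add: S_nz_row_def)
  then show ?thesis
    using S_nz_row_abs_row_sum_pos [OF assms] by (simp add: f_HbM_nth [OF assms])
qed

lemma f_HbM_in_S_s_symm_pos:
  fixes X :: "real^'n^'n"
  assumes "X \<in> S_nz_row"
  shows "f_HbM X \<in> S_s_symm_pos"
proof -
  have "sgn (f_HbM X $ i $ j) = sgn (X $ i \<bullet> X $ j)" for i j
    using S_nz_row_abs_row_sum_pos [OF assms, of i] by (simp add: f_HbM_nth [OF assms] sgn_divide)
  then have "sign_mat (f_HbM X) = transpose (sign_mat (f_HbM X))"
    by (simp add: sign_mat_def transpose_def vec_eq_iff inner_commute)
  then show ?thesis
    using f_HbM_diag_pos [OF assms] by (simp add: S_s_symm_pos_def)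
qed

lemma f_HbM_in_S_nz_row:
  fixes X :: "real^'n^'n"
  assumes "X \<in> S_nz_row"
  shows "f_HbM X \<in> S_nz_row"
  unfolding S_nz_row_def
proof (intro CollectI allI notI)
  fix i
  assume "f_HbM X $ i = 0"
  then show False
    using f_HbM_diag_pos [OF assms, of i] by simp
qed

lemma finite_abs_entries: "finite {\<bar>X $ i $ j\<bar> | i j. True}"
proof -
  have "{\<bar>X $ i $ j\<bar> | i j. True} = (\<lambda>(i, j). \<bar>X $ i $ j\<bar>) ` UNIV"
    by auto
  then show ?thesis by simp
qed

lemma abs_le_max_abs_entry: "\<bar>X $ i $ j\<bar> \<le> max_abs_entry X"
  unfolding max_abs_entry_def by (rule Max_ge [OF finite_abs_entries]) auto

lemma max_abs_entry_leI:
  assumes "\<And>i j. \<bar>X $ i $ j\<bar> \<le> M"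
  shows "max_abs_entry X \<le> M"
  unfolding max_abs_entry_def
  by (rule Max.boundedI [OF finite_abs_entries]) (use assms in auto)

lemma abs_inner_row_le:
  fixes X :: "real^'n^'n"
  shows "\<bar>X $ i \<bullet> X $ j\<bar> \<le> abs_row_sum X i * max_abs_entry X"
proof -
  have "\<bar>X $ i \<bullet> X $ j\<bar> \<le> (\<Sum>k\<in>UNIV. \<bar>X $ i $ k\<bar> * \<bar>X $ j $ k\<bar>)"
    unfolding inner_vec_def using sum_abs [of "\<lambda>k. X $ i $ k * X $ j $ k"]
    by (simp add: abs_mult)
  also have "\<dots> \<le> (\<Sum>k\<in>UNIV. \<bar>X $ i $ k\<bar> * max_abs_entry X)"
    by (rule sum_mono) (simp add: abs_le_max_abs_entry mult_left_mono)
  also have "\<dots> = abs_row_sum X i * max_abs_entry X"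
    by (simp add: abs_row_sum_def sum_distrib_right)
  finally show ?thesis .
qed

lemma max_abs_entry_f_HbM_le:
  fixes X :: "real^'n^'n"
  assumes "X \<in> S_nz_row"
  shows "max_abs_entry (f_HbM X) \<le> max_abs_entry X"
proof (rule max_abs_entry_leI)
  fix i j
  have "abs_row_sum X i > 0"
    using assms by (rule S_nz_row_abs_row_sum_pos)
  then show "\<bar>f_HbM X $ i $ j\<bar> \<le> max_abs_entry X"
    using abs_inner_row_le [of X i j]
    by (simp add: f_HbM_nth [OF assms] abs_div pos_divide_le_eq mult.commute)
qed

lemma f_HbM_scaleR:
  fixes X :: "real^'n^'n"
  assumes "X \<in> S_nz_row" and "c > 0"
  shows "f_HbM (c *\<^sub>R X) = c *\<^sub>R f_HbM X"
proof -
  have cX: "c *\<^sub>R X \<in> S_nz_row"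
    using assms by (simp add: S_nz_row_def)
  have "abs_row_sum X i \<noteq> 0" for i
    using S_nz_row_abs_row_sum_pos [OF assms(1)] by (metis less_irrefl)
  then show ?thesis
    using assms(2)
    by (simp add: vec_eq_iff f_HbM_nth [OF cX] f_HbM_nth [OF assms(1)] abs_row_sum_scaleR)
qed

lemma is_HbM_solution_iterates:
  assumes "X0 \<in> S_nz_row"
  shows "is_HbM_solution (\<lambda>t. (f_HbM ^^ t) X0) X0"
proof -
  have "(f_HbM ^^ t) X0 \<in> S_nz_row" for t
    by (induction t) (simp_all add: assms f_HbM_in_S_nz_row)
  then show ?thesis
    by (simp add: is_HbM_solution_def)
qed

lemma is_HbM_solution_eq_iterates:
  assumes "is_HbM_solution X X0"
  shows "X = (\<lambda>t. (f_HbM ^^ t) X0)"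
proof
  fix t show "X t = (f_HbM ^^ t) X0"
    using assms by (induction t) (simp_all add: is_HbM_solution_def)
qed

lemma is_HbM_solution_ex1:
  assumes "X0 \<in> S_nz_row"
  shows "\<exists>!X. is_HbM_solution X X0"
  using is_HbM_solution_iterates [OF assms] is_HbM_solution_eq_iterates by blast

lemma is_HbM_solution_decseq_max_abs_entry:
  assumes "is_HbM_solution X X0"
  shows "decseq (\<lambda>t. max_abs_entry (X t))"
  using assms by (intro decseq_SucI) (simp add: is_HbM_solution_def max_abs_entry_f_HbM_le)

lemma is_HbM_solution_scaleR:
  assumes "is_HbM_solution X X0" and "c > 0"
  shows "is_HbM_solution (\<lambda>t. c *\<^sub>R X t) (c *\<^sub>R X0)"
  using assms by (auto simp: is_HbM_solution_def f_HbM_scaleR S_nz_row_def)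

theorem proposition3p3:
  fixes X0 :: "real^'n^'n"
  assumes "X0 \<in> S_nz_row"
  shows "(\<forall>X \<in> (S_nz_row :: (real^'n^'n) set).
            invertible (diag_mat (abs_mat X *v ones_vec)) \<and> f_HbM X \<in> S_s_symm_pos)
    \<and> (\<exists>!X. is_HbM_solution X X0)
    \<and> (\<forall>X. is_HbM_solution X X0 \<longrightarrow>
          (\<forall>t. max_abs_entry (X (Suc t)) \<le> max_abs_entry (X t)
               \<and> max_abs_entry (X t) \<le> max_abs_entry (X 0)))
    \<and> (\<forall>c > 0. \<forall>X. is_HbM_solution X X0 \<longrightarrow>
          is_HbM_solution (\<lambda>t. c *\<^sub>R X t) (c *\<^sub>R X0))"
proof (intro conjI allI impI ballI)
  fix X :: "real^'n^'n"
  assume "X \<in> S_nz_row"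
  then show "invertible (diag_mat (abs_mat X *v ones_vec))" and "f_HbM X \<in> S_s_symm_pos"
    by (simp_all add: invertible_diag_abs_row_sums f_HbM_in_S_s_symm_pos)
next
  show "\<exists>!X. is_HbM_solution X X0"
    using assms by (rule is_HbM_solution_ex1)
next
  fix X t
  assume "is_HbM_solution X X0"
  then have "decseq (\<lambda>t. max_abs_entry (X t))"
    by (rule is_HbM_solution_decseq_max_abs_entry)
  then show "max_abs_entry (X (Suc t)) \<le> max_abs_entry (X t)"
    and "max_abs_entry (X t) \<le> max_abs_entry (X 0)"
    by (simp_all add: decseq_def)
next
  fix c :: real and X
  assume "c > 0" and "is_HbM_solution X X0"
  then show "is_HbM_solution (\<lambda>t. c *\<^sub>R X t) (c *\<^sub>R X0)"
    by (simp add: is_HbM_solution_scaleR)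
qed

end
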